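(* Assume $\min_{\ell=2,\dots,L}\rho_{\ell-1,\ell}>0$ and $0<D(f_1,f_0)<\infty$. Let $L_\alpha=\log\big(\frac{1}{\rho\alpha}\big)/\big(L D(f_1,f_0)+|\log(1-\rho)|\big)$ and, for $k\ge1$, let $P_k$ denote the probability measure of the model conditioned on $\Gamma_1=k$ (with $\Gamma_2,\dots,\Gamma_L$ and the observations generated as in the model given $\Gamma_1=k$). Then for every $\varepsilon\in(0,1)$ and every $k\ge1$, $$\lim_{\alpha\to0}\ \sup_{\tau\in\Delta_\alpha}P_k\big(k\le\tau<k+(1-\varepsilon)L_\alpha\big)=0,$$ where $\Delta_\alpha=\{\tau:P(\tau<\Gamma_1)\le\alpha\}$.
   Context: Model. Fix an integer $L\ge1$, $\rho\in(0,1)$ and $\rho_{\ell-1,\ell}\in[0,1]$ ($\ell=2,\dots,L$). Change-points: $P(\Gamma_1=m)=\rho(1-\rho)^m$, $m\ge0$; $\Gamma_\ell=\Gamma_{\ell-1}+G_\ell$ with $G_2,\dots,G_L$ independent of each other and of $\Gamma_1$, $P(G_\ell=m)=\rho_{\ell-1,\ell}(1-\rho_{\ell-1,\ell})^m$. $f_0,f_1$ are mutually absolutely continuous densities with Kullback–Leibler divergence $D(f_1,f_0)=\int f_1\log(f_1/f_0)$. Conditionally on the change-points, the observations $Z_{k,\ell}$ are independent with density $f_0$ if $k<\Gamma_\ell$ and $f_1$ if $k\ge\Gamma_\ell$. Stopping times are with respect to the observation filtration; $P$ is the (unconditional) law of the model. *)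

theory Defs
  imports "HOL-Probability.Probability"
begin

text \<open>Change-points as a list [Gamma_1, ..., Gamma_L] (Gamma_l is the (l-1)-th entry).
  first = law of Gamma_1; r l = rho_{l-1,l} for l = 2..L.\<close>
fun cp_pmf :: "nat pmf \<Rightarrow> (nat \<Rightarrow> real) \<Rightarrow> nat \<Rightarrow> nat list pmf" where
  "cp_pmf first r 0 = return_pmf []"
| "cp_pmf first r (Suc 0) = map_pmf (\<lambda>m. [m]) first"
| "cp_pmf first r (Suc (Suc l)) =
     bind_pmf (cp_pmf first r (Suc l)) (\<lambda>gs.
       map_pmf (\<lambda>g. gs @ [last gs + g]) (geometric_pmf (r (Suc (Suc l)))))"

text \<open>Index set of the observations Z_{k,l}: times k = 0,1,2,... and streams l = 1..L.\<close>
definition obs_index :: "nat \<Rightarrow> (nat \<times> nat) set" where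
  "obs_index L = UNIV \<times> {1..L}"

definition obs_space :: "'b measure \<Rightarrow> nat \<Rightarrow> ((nat \<times> nat) \<Rightarrow> 'b) measure" where
  "obs_space \<mu> L = PiM (obs_index L) (\<lambda>_. \<mu>)"

definition obs_law :: "'b measure \<Rightarrow> ('b \<Rightarrow> real) \<Rightarrow> ('b \<Rightarrow> real) \<Rightarrow> nat \<Rightarrow> nat list
    \<Rightarrow> ((nat \<times> nat) \<Rightarrow> 'b) measure" where
  "obs_law \<mu> f0 f1 L gs = PiM (obs_index L)
     (\<lambda>(k, l). density \<mu> (\<lambda>x. ennreal (if k < gs ! (l - 1) then f0 x else f1 x)))"

definition model :: "'b measure \<Rightarrow> ('b \<Rightarrow> real) \<Rightarrow> ('b \<Rightarrow> real) \<Rightarrow> nat \<Rightarrow> nat pmf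
    \<Rightarrow> (nat \<Rightarrow> real) \<Rightarrow> (nat list \<times> ((nat \<times> nat) \<Rightarrow> 'b)) measure" where
  "model \<mu> f0 f1 L first r =
     bind (measure_pmf (cp_pmf first r L))
       (\<lambda>gs. distr (obs_law \<mu> f0 f1 L gs) (count_space UNIV \<Otimes>\<^sub>M obs_space \<mu> L) (\<lambda>z. (gs, z)))"

definition obs_filtration :: "'b measure \<Rightarrow> nat \<Rightarrow> enat \<Rightarrow> ((nat \<times> nat) \<Rightarrow> 'b) measure" where
  "obs_filtration \<mu> L t = sigma (space (obs_space \<mu> L))
     {(\<lambda>\<omega>. \<omega> (k, l)) -` B \<inter> space (obs_space \<mu> L) | k l B.
        enat k \<le> t \<and> l \<in> {1..L} \<and> B \<in> sets \<mu>}"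

definition KL_div :: "'b measure \<Rightarrow> ('b \<Rightarrow> real) \<Rightarrow> ('b \<Rightarrow> real) \<Rightarrow> real" where
  "KL_div \<mu> f1 f0 = (\<integral>x. f1 x * ln (f1 x / f0 x) \<partial>\<mu>)"

definition Delta :: "'b measure \<Rightarrow> ('b \<Rightarrow> real) \<Rightarrow> ('b \<Rightarrow> real) \<Rightarrow> nat \<Rightarrow> real
    \<Rightarrow> (nat \<Rightarrow> real) \<Rightarrow> real \<Rightarrow> (((nat \<times> nat) \<Rightarrow> 'b) \<Rightarrow> enat) set" where
  "Delta \<mu> f0 f1 L \<rho> r \<alpha> = {\<tau>. stopping_time (obs_filtration \<mu> L) \<tau> \<and>
     measure (model \<mu> f0 f1 L (geometric_pmf \<rho>) r)
       {p \<in> space (model \<mu> f0 f1 L (geometric_pmf \<rho>) r). \<tau> (snd p) < enat (hd (fst p))} \<le> \<alpha>}"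

end

theory Submission
  imports Defs
begin

(* Proof plan.  Fix a stopping time tau with false-alarm probability P(tau < Gamma_1) <= alpha
   and put N = k + ceil((1 - eps) L_alpha).  Everything happens on the event {tau < N}.

   (1) Since {tau < N} = {tau <= N - 1} is F_(N-1)-measurable, it is a cylinder set
       prod_emb B over the first N time rows of observations (lemma stopping_cylinder).
   (2) Lower bound: on {Gamma_1 = N} all observations of these rows are pre-change, so
       P(tau < Gamma_1) >= rho (1 - rho)^N Q0(B), with Q0 the all-f0 product law
       (lemma false_alarm_lower); hence Q0(B) <= alpha / (rho (1 - rho)^N).
   (3) Upper bound: under P_k, given the change-points, the observations on the first N rows
       are f1-distributed on a set S of at most L (N - k) coordinates and f0 elsewhere.  A change
       of measure with the likelihood ratio f1/f0 gives  P_S(B) <= e^C Q0(B) + P_S(LLR_S > C)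
       (lemma change_of_measure), and a weak law of large numbers for the log-likelihood ratio,
       proved by truncation plus a second-moment bound (lemma coord_sum_tail), makes the last
       term small when C = (D + eta) L (N - k) (lemma detection_upper).
   (4) With the choice of N the factor e^C / (rho (1 - rho)^N) grows only like alpha^(eps/2 - 1),
       so all terms are small as alpha -> 0 (lemmas false_alarm_exponent, early_detection_small);
       the theorem is the resulting uniform bound, turned into a limit of suprema. *)

section \<open>The change-point distribution\<close>

lemma cp_pmf_props:
  assumes "n \<ge> 1"
  shows "(\<forall>gs\<in>set_pmf (cp_pmf first r n). length gs = n \<and> hd gs \<in> set_pmf first \<and> (\<forall>i<n. hd gs \<le> gs ! i))
         \<and> map_pmf hd (cp_pmf first r n) = first"
  using assms
proof (induction n rule: nat_induct_at_least)
  case base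
  then show ?case by (simp add: pmf.map_comp o_def)
next
  case (Suc n)
  then obtain m where n: "n = Suc m" by (cases n) auto
  have IH1: "\<forall>gs\<in>set_pmf (cp_pmf first r n). length gs = n \<and> hd gs \<in> set_pmf first \<and> (\<forall>i<n. hd gs \<le> gs ! i)"
    and IH2: "map_pmf hd (cp_pmf first r n) = first" using Suc by auto
  have eq: "cp_pmf first r (Suc n) = bind_pmf (cp_pmf first r n) (\<lambda>gs.
       map_pmf (\<lambda>g. gs @ [last gs + g]) (geometric_pmf (r (Suc n))))"
    by (simp add: n)
  have shape: "\<forall>gs\<in>set_pmf (cp_pmf first r (Suc n)). length gs = Suc n \<and> hd gs \<in> set_pmf first \<and> (\<forall>i<Suc n. hd gs \<le> gs ! i)"
  proof
    fix gs assume "gs \<in> set_pmf (cp_pmf first r (Suc n))"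
    then obtain hs g where hs: "hs \<in> set_pmf (cp_pmf first r n)" and gs: "gs = hs @ [last hs + g]"
      unfolding eq by auto
    from IH1 hs have h: "length hs = n" "hd hs \<in> set_pmf first" "\<forall>i<n. hd hs \<le> hs ! i" by auto
    have ne: "hs \<noteq> []" using h(1) n by auto
    have hd: "hd gs = hd hs" using ne gs by simp
    have lst: "last hs = hs ! (n - 1)" using ne h(1) by (simp add: last_conv_nth)
    show "length gs = Suc n \<and> hd gs \<in> set_pmf first \<and> (\<forall>i<Suc n. hd gs \<le> gs ! i)"
    proof (intro conjI allI impI)
      show "length gs = Suc n" using gs h by simp
      show "hd gs \<in> set_pmf first" using hd h by simp
      fix i assume "i < Suc n"
      then show "hd gs \<le> gs ! i"
      proof (cases "i < n")
        case True then show ?thesis using gs hd h by (simp add: nth_append)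
      next
        case False
        then have "i = n" using \<open>i < Suc n\<close> by simp
        moreover have "hd hs \<le> hs ! (n - 1)" using h n by simp
        ultimately show ?thesis using gs hd h lst by (simp add: nth_append)
      qed
    qed
  qed
  have "map_pmf hd (cp_pmf first r (Suc n)) =
        bind_pmf (cp_pmf first r n) (\<lambda>gs. map_pmf (\<lambda>g. hd (gs @ [last gs + g])) (geometric_pmf (r (Suc n))))"
    unfolding eq by (simp add: map_bind_pmf pmf.map_comp o_def)
  also have "\<dots> = bind_pmf (cp_pmf first r n) (\<lambda>gs. return_pmf (hd gs))"
  proof (rule bind_pmf_cong[OF refl])
    fix gs assume "gs \<in> set_pmf (cp_pmf first r n)"
    then have "gs \<noteq> []" using IH1 n by auto
    then show "map_pmf (\<lambda>g. hd (gs @ [last gs + g])) (geometric_pmf (r (Suc n))) = return_pmf (hd gs)"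
      by (simp add: map_pmf_const)
  qed
  also have "\<dots> = map_pmf hd (cp_pmf first r n)" by (simp add: map_pmf_def)
  finally show ?case using shape IH2 by simp
qed

section \<open>Sums of independent coordinates in a product probability space\<close>

lemma product_prob_spaceI: "(\<And>i. prob_space (M i)) \<Longrightarrow> product_prob_space M"
  by (simp add: product_prob_space_def product_prob_space_axioms_def product_sigma_finite_def
      prob_space_imp_sigma_finite)

text \<open>A coordinate of a product of probability spaces has the law of its factor.\<close>

lemma coord_integrable:
  assumes M: "\<And>i. i \<in> J \<Longrightarrow> prob_space (M i)" and i: "i \<in> J"
    and g: "integrable (M i) (g :: _ \<Rightarrow> real)"
  shows "integrable (PiM J M) (\<lambda>z. g (z i))"
proof -
  have gm: "g \<in> borel_measurable (M i)" using g by auto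
  have "integrable (distr (PiM J M) (M i) (\<lambda>\<omega>. \<omega> i)) g"
    using distr_PiM_component[of J M i, OF M i] g by simp
  then show ?thesis
    using integrable_distr_eq[of "\<lambda>\<omega>. \<omega> i" "PiM J M" "M i" g] i gm by simp
qed

lemma coord_integral:
  assumes M: "\<And>i. i \<in> J \<Longrightarrow> prob_space (M i)" and i: "i \<in> J"
    and gm: "(g :: _ \<Rightarrow> real) \<in> borel_measurable (M i)"
  shows "(\<integral>z. g (z i) \<partial>PiM J M) = (\<integral>x. g x \<partial>M i)"
proof -
  have "(\<integral>x. g x \<partial>M i) = (\<integral>x. g x \<partial>distr (PiM J M) (M i) (\<lambda>\<omega>. \<omega> i))"
    using distr_PiM_component[of J M i, OF M i] by simp
  also have "\<dots> = (\<integral>z. g (z i) \<partial>PiM J M)"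
    using integral_distr[of "\<lambda>\<omega>. \<omega> i" "PiM J M" "M i" g] i gm by simp
  finally show ?thesis ..
qed

lemma integral_prod_coords:
  assumes pps: "product_prob_space M" and J: "finite J" and K: "K \<subseteq> J"
    and g: "\<And>l. l \<in> K \<Longrightarrow> integrable (M l) (g l :: _ \<Rightarrow> real)"
  shows "(\<integral>z. (\<Prod>l\<in>K. g l (z l)) \<partial>PiM J M) = (\<Prod>l\<in>K. \<integral>x. g l x \<partial>M l)"
proof -
  interpret product_prob_space M J by (rule pps)
  let ?h = "\<lambda>l. if l \<in> K then g l else (\<lambda>_. 1)"
  have "(\<integral>z. (\<Prod>l\<in>K. g l (z l)) \<partial>PiM J M) = (\<integral>z. (\<Prod>l\<in>J. ?h l (z l)) \<partial>PiM J M)"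
    by (rule Bochner_Integration.integral_cong[OF refl], rule prod.mono_neutral_cong_left[OF J K]) auto
  also have "\<dots> = (\<Prod>l\<in>J. \<integral>x. ?h l x \<partial>M l)"
    by (rule product_integral_prod[OF J]) (auto simp: g)
  also have "\<dots> = (\<Prod>l\<in>K. \<integral>x. g l x \<partial>M l)"
    by (rule prod.mono_neutral_cong_right[OF J K]) (auto simp: prob_space.prob_space[OF prob_space])
  finally show ?thesis .
qed

lemma nonneg_coord_sum_markov:
  assumes pps: "product_prob_space M" and S: "S \<subseteq> J"
    and MS: "\<And>j. j \<in> S \<Longrightarrow> M j = \<nu>"
    and R: "integrable \<nu> R" "\<And>x. 0 \<le> R x" and t: "0 < t"
  shows "measure (PiM J M) {z \<in> space (PiM J M). t \<le> (\<Sum>j\<in>S. R (z j))}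
     \<le> real (card S) * (\<integral>x. R x \<partial>\<nu>) / t"
proof -
  interpret PP: product_prob_space M J by (rule pps)
  have probJ: "\<And>i. i \<in> J \<Longrightarrow> prob_space (M i)" by (rule PP.prob_space)
  have Rc: "integrable (PiM J M) (\<lambda>z. R (z j))" if "j \<in> S" for j
    using coord_integrable[of J M j R, OF probJ] R(1) MS[OF that] S that by auto
  have Rsum: "integrable (PiM J M) (\<lambda>z. \<Sum>j\<in>S. R (z j))"
    using Rc by (intro Bochner_Integration.integrable_sum) auto
  have "(\<integral>z. (\<Sum>j\<in>S. R (z j)) \<partial>PiM J M) = (\<Sum>j\<in>S. \<integral>z. R (z j) \<partial>PiM J M)"
    using Rc by (intro Bochner_Integration.integral_sum) auto
  also have "\<dots> = (\<Sum>j\<in>S. \<integral>x. R x \<partial>\<nu>)"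
    using MS S R(1) by (intro sum.cong refl) (subst coord_integral[OF probJ], auto)
  finally have mean: "(\<integral>z. (\<Sum>j\<in>S. R (z j)) \<partial>PiM J M) = real (card S) * (\<integral>x. R x \<partial>\<nu>)" by simp
  show ?thesis
    unfolding mean[symmetric]
    by (rule integral_Markov_inequality_measure[OF Rsum sets.top]) (use R t in \<open>auto intro!: AE_I2 sum_nonneg\<close>)
qed

text \<open>Chebyshev's inequality for a centred sum of independent, identically distributed bounded
  coordinates: the cross terms of the second moment vanish by independence.\<close>

lemma centered_coord_sum_deviation:
  assumes pps: "product_prob_space M" and J: "finite J" and S: "S \<subseteq> J"
    and MS: "\<And>j. j \<in> S \<Longrightarrow> M j = \<nu>" and nuP: "prob_space \<nu>"
    and Ym: "Y \<in> borel_measurable \<nu>" and Yb: "\<And>x. \<bar>Y x\<bar> \<le> c" and t: "0 < t"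
  shows "measure (PiM J M) {z \<in> space (PiM J M). t \<le> (\<Sum>j\<in>S. Y (z j) - (\<integral>x. Y x \<partial>\<nu>))}
     \<le> real (card S) * (2 * c)\<^sup>2 / t\<^sup>2"
proof -
  interpret PP: product_prob_space M J by (rule pps)
  interpret N: prob_space \<nu> by (rule nuP)
  define m where "m = (\<integral>x. Y x \<partial>\<nu>)"
  let ?a = "\<lambda>z j. Y (z j) - m"
  let ?P = "PiM J M"
  have Yi: "integrable \<nu> Y" by (rule N.integrable_const_bound[where B=c]) (use Yb Ym in auto)
  have "\<bar>m\<bar> \<le> (\<integral>x. \<bar>Y x\<bar> \<partial>\<nu>)" unfolding m_def by (rule integral_abs_bound)
  also have "\<dots> \<le> c" by (rule N.integral_le_const) (use Yi Yb in auto)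
  finally have ab: "\<bar>Y x - m\<bar> \<le> 2 * c" for x using Yb[of x] by auto
  have ab2: "\<bar>(Y x - m) * (Y y - m)\<bar> \<le> (2 * c)\<^sup>2" for x y
    using mult_mono[OF ab[of x] ab[of y]] abs_ge_zero[of "Y x"] Yb[of x] by (simp add: power2_eq_square abs_mult)
  have am: "(\<lambda>z. ?a z j) \<in> borel_measurable ?P" if "j \<in> S" for j
    using that MS[OF that] S Ym by (auto intro!: borel_measurable_diff measurable_compose[OF measurable_component_singleton])
  have ai: "integrable ?P (\<lambda>z. ?a z i * ?a z j)" if "i \<in> S" "j \<in> S" for i j
  proof (rule PP.P.integrable_const_bound[where B="(2 * c)\<^sup>2"])
    show "AE z in ?P. norm (?a z i * ?a z j) \<le> (2 * c)\<^sup>2"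
      using ab2 by (intro AE_I2) simp
  qed (use that am in auto)
  have cross: "(\<integral>z. ?a z i * ?a z j \<partial>?P) = 0" if ij: "i \<in> S" "j \<in> S" "i \<noteq> j" for i j
  proof -
    have "(\<integral>z. ?a z i * ?a z j \<partial>?P) = (\<integral>z. (\<Prod>l\<in>{i,j}. Y (z l) - m) \<partial>?P)"
      using ij by simp
    also have "\<dots> = (\<Prod>l\<in>{i,j}. \<integral>x. Y x - m \<partial>M l)"
      using ij S MS Yi by (intro integral_prod_coords[OF pps J]) auto
    also have "\<dots> = 0" using ij MS Yi by (simp add: m_def N.prob_space)
    finally show ?thesis .
  qed
  have sq: "(\<Sum>j\<in>S. ?a z j)\<^sup>2 = (\<Sum>i\<in>S. \<Sum>j\<in>S. ?a z i * ?a z j)" for z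
    by (simp add: power2_eq_square sum_product)
  have Ia: "integrable ?P (\<lambda>z. (\<Sum>j\<in>S. ?a z j)\<^sup>2)"
    unfolding sq using ai by (intro Bochner_Integration.integrable_sum) auto
  have "(\<integral>z. (\<Sum>j\<in>S. ?a z j)\<^sup>2 \<partial>?P) = (\<Sum>i\<in>S. \<Sum>j\<in>S. \<integral>z. ?a z i * ?a z j \<partial>?P)"
    unfolding sq using ai by (simp add: integral_sum integrable_sum)
  also have "\<dots> = (\<Sum>i\<in>S. \<integral>z. ?a z i * ?a z i \<partial>?P)"
  proof (rule sum.cong[OF refl])
    fix i assume i: "i \<in> S"
    have "(\<Sum>j\<in>S. \<integral>z. ?a z i * ?a z j \<partial>?P) = (\<Sum>j\<in>S. if j = i then \<integral>z. ?a z i * ?a z i \<partial>?P else 0)"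
      using cross i by (intro sum.cong refl) auto
    then show "(\<Sum>j\<in>S. \<integral>z. ?a z i * ?a z j \<partial>?P) = (\<integral>z. ?a z i * ?a z i \<partial>?P)"
      using i finite_subset[OF S J] by simp
  qed
  also have "\<dots> \<le> (\<Sum>i\<in>S. (2 * c)\<^sup>2)"
    using ai abs_le_D1[OF ab2] by (intro sum_mono PP.P.integral_le_const AE_I2) auto
  finally have second_moment: "(\<integral>z. (\<Sum>j\<in>S. ?a z j)\<^sup>2 \<partial>?P) \<le> real (card S) * (2 * c)\<^sup>2" by simp
  have sum_m: "(\<lambda>z. \<Sum>j\<in>S. ?a z j) \<in> borel_measurable ?P"
    using am by (intro borel_measurable_sum) auto
  have "measure ?P {z \<in> space ?P. t \<le> (\<Sum>j\<in>S. ?a z j)} \<le> measure ?P {z \<in> space ?P. t\<^sup>2 \<le> (\<Sum>j\<in>S. ?a z j)\<^sup>2}"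
    using t sum_m by (intro PP.P.finite_measure_mono) (auto intro: power_mono)
  also have "\<dots> \<le> (\<integral>z. (\<Sum>j\<in>S. ?a z j)\<^sup>2 \<partial>?P) / t\<^sup>2"
    by (rule integral_Markov_inequality_measure[OF Ia sets.top]) (use t in auto)
  also have "\<dots> \<le> real (card S) * (2 * c)\<^sup>2 / t\<^sup>2"
    using second_moment by (intro divide_right_mono) auto
  finally show ?thesis by (simp add: m_def)
qed

lemma truncation_split:
  fixes x :: "'i \<Rightarrow> real"
  assumes m: "real (card S) * m \<le> Mp * (d + \<eta> / 4)" and C: "(d + \<eta>) * Mp \<le> C"
    and gt: "C < (\<Sum>j\<in>S. x j)"
  shows "\<eta> * Mp / 4 \<le> (\<Sum>j\<in>S. max (-c) (min c (x j)) - m) \<or> \<eta> * Mp / 2 \<le> (\<Sum>j\<in>S. max 0 (\<bar>x j\<bar> - c))"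
proof -
  have "(\<Sum>j\<in>S. x j) \<le> (\<Sum>j\<in>S. (max (-c) (min c (x j)) - m) + m + max 0 (\<bar>x j\<bar> - c))"
    by (rule sum_mono) auto
  also have "\<dots> = (\<Sum>j\<in>S. max (-c) (min c (x j)) - m) + real (card S) * m + (\<Sum>j\<in>S. max 0 (\<bar>x j\<bar> - c))"
    by (simp add: sum.distrib sum_subtractf)
  finally show ?thesis using m C gt by (auto simp: algebra_simps)
qed

text \<open>X is split into its truncation at level c,
  handled by Chebyshev, and the overshoot max 0 (|X| - c), handled by Markov.\<close>

lemma coord_sum_tail:
  fixes M :: "'i \<Rightarrow> 'a measure" and X :: "'a \<Rightarrow> real"
  assumes pps: "product_prob_space M" and J: "finite J" and S: "S \<subseteq> J"
    and MS: "\<And>j. j \<in> S \<Longrightarrow> M j = \<nu>" and nuP: "prob_space \<nu>"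
    and Xi: "integrable \<nu> X"
    and c: "0 < c" and eta: "0 < \<eta>" and Mp: "0 < Mp" "real (card S) \<le> Mp"
    and D: "0 \<le> (\<integral>x. X x \<partial>\<nu>)"
    and overshoot: "(\<integral>x. max 0 (\<bar>X x\<bar> - c) \<partial>\<nu>) \<le> \<eta> / 4"
    and C: "(\<integral>x. X x \<partial>\<nu> + \<eta>) * Mp \<le> C"
  shows "measure (PiM J M) {z \<in> space (PiM J M). C < (\<Sum>j\<in>S. X (z j))}
     \<le> 64 * c\<^sup>2 / (\<eta>\<^sup>2 * Mp) + 2 * (\<integral>x. max 0 (\<bar>X x\<bar> - c) \<partial>\<nu>) / \<eta>"
proof -
  interpret PP: product_prob_space M J by (rule pps)
  interpret N: prob_space \<nu> by (rule nuP)
  have Xm[measurable]: "X \<in> borel_measurable \<nu>" using Xi by auto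
  define Y where "Y x = max (-c) (min c (X x))" for x
  define R where "R x = max 0 (\<bar>X x\<bar> - c)" for x
  define m where "m = (\<integral>x. Y x \<partial>\<nu>)"
  define over where "over = (\<integral>x. R x \<partial>\<nu>)"
  have Ym[measurable]: "Y \<in> borel_measurable \<nu>" unfolding Y_def by measurable
  have Yb: "\<bar>Y x\<bar> \<le> c" for x unfolding Y_def using c by auto
  have Yi: "integrable \<nu> Y" by (rule N.integrable_const_bound[where B=c]) (use Yb in auto)
  have Ri: "integrable \<nu> R" unfolding R_def using Xi by auto
  have R0: "0 \<le> R x" for x unfolding R_def by auto
  have m_le: "m \<le> (\<integral>x. X x \<partial>\<nu>) + over"
  proof -
    have "m \<le> (\<integral>x. X x + R x \<partial>\<nu>)"
      unfolding m_def by (rule integral_mono[OF Yi]) (use Xi Ri in \<open>auto simp: Y_def R_def\<close>)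
    then show ?thesis unfolding over_def using Xi Ri by simp
  qed
  have over0: "0 \<le> over" unfolding over_def using R0 by simp
  define T1 where "T1 = {z \<in> space (PiM J M). \<eta> * Mp / 4 \<le> (\<Sum>j\<in>S. Y (z j) - m)}"
  define T2 where "T2 = {z \<in> space (PiM J M). \<eta> * Mp / 2 \<le> (\<Sum>j\<in>S. R (z j))}"
  have coord_m: "(\<lambda>z. f (z j)) \<in> borel_measurable (PiM J M)"
    if "j \<in> S" "f \<in> borel_measurable \<nu>" for f :: "'a \<Rightarrow> real" and j
    using that MS[OF that(1)] S by (auto intro!: measurable_compose[OF measurable_component_singleton])
  have T1m: "T1 \<in> sets (PiM J M)"
  proof -
    have "(\<lambda>z. \<Sum>j\<in>S. Y (z j) - m) \<in> borel_measurable (PiM J M)"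
      by (intro borel_measurable_sum borel_measurable_diff coord_m Ym) auto
    then show ?thesis unfolding T1_def by measurable
  qed
  have T2m: "T2 \<in> sets (PiM J M)"
  proof -
    have Rm: "R \<in> borel_measurable \<nu>" using Ri by auto
    have "(\<lambda>z. \<Sum>j\<in>S. R (z j)) \<in> borel_measurable (PiM J M)"
      by (intro borel_measurable_sum coord_m Rm) auto
    then show ?thesis unfolding T2_def by measurable
  qed
  have "real (card S) * m \<le> real (card S) * ((\<integral>x. X x \<partial>\<nu>) + over)" using m_le by (simp add: mult_left_mono)
  also have "\<dots> \<le> Mp * ((\<integral>x. X x \<partial>\<nu>) + \<eta> / 4)"
    using Mp D over0 overshoot by (intro mult_mono) (auto simp: over_def R_def)
  finally have mean_part: "real (card S) * m \<le> Mp * ((\<integral>x. X x \<partial>\<nu>) + \<eta> / 4)" .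
  have split: "{z \<in> space (PiM J M). C < (\<Sum>j\<in>S. X (z j))} \<subseteq> T1 \<union> T2"
  proof
    fix z assume "z \<in> {z \<in> space (PiM J M). C < (\<Sum>j\<in>S. X (z j))}"
    then show "z \<in> T1 \<union> T2"
      using truncation_split[OF mean_part C, where x="\<lambda>j. X (z j)" and c=c] by (auto simp: T1_def T2_def Y_def R_def)
  qed
  have "measure (PiM J M) {z \<in> space (PiM J M). C < (\<Sum>j\<in>S. X (z j))} \<le> measure (PiM J M) (T1 \<union> T2)"
    using split T1m T2m by (intro PP.P.finite_measure_mono) auto
  also have "\<dots> \<le> measure (PiM J M) T1 + measure (PiM J M) T2"
    using T1m T2m by (rule measure_Un_le)
  also have "measure (PiM J M) T1 \<le> 64 * c\<^sup>2 / (\<eta>\<^sup>2 * Mp)"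
  proof -
    have "measure (PiM J M) T1 \<le> real (card S) * (2 * c)\<^sup>2 / (\<eta> * Mp / 4)\<^sup>2"
      unfolding T1_def m_def
      by (rule centered_coord_sum_deviation[OF pps J S MS nuP Ym Yb]) (use eta Mp in auto)
    also have "\<dots> \<le> Mp * (2 * c)\<^sup>2 / (\<eta> * Mp / 4)\<^sup>2"
      using Mp by (intro divide_right_mono mult_right_mono) auto
    also have "\<dots> = 64 * c\<^sup>2 / (\<eta>\<^sup>2 * Mp)" using Mp eta by (simp add: field_simps power2_eq_square)
    finally show ?thesis .
  qed
  also have "measure (PiM J M) T2 \<le> 2 * over / \<eta>"
  proof -
    have "measure (PiM J M) T2 \<le> real (card S) * over / (\<eta> * Mp / 2)"
      unfolding T2_def over_def by (rule nonneg_coord_sum_markov[OF pps S MS Ri R0]) (use eta Mp in auto)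
    also have "\<dots> \<le> Mp * over / (\<eta> * Mp / 2)"
      using Mp eta over0 by (intro divide_right_mono mult_right_mono) auto
    also have "\<dots> = 2 * over / \<eta>" using Mp eta by (simp add: field_simps)
    finally show ?thesis .
  qed
  finally show ?thesis unfolding over_def R_def by simp
qed

text \<open>The overshoot of an integrable function beyond level c has vanishing integral as c grows
  (dominated convergence), so the truncation error in coord_sum_tail can be made small.\<close>

lemma overshoot_small:
  fixes X :: "'a \<Rightarrow> real"
  assumes X: "integrable M X" and d: "0 < \<delta>"
  shows "\<exists>c>0. (\<integral>x. max 0 (\<bar>X x\<bar> - c) \<partial>M) \<le> \<delta>"
proof -
  let ?s = "\<lambda>n x. max 0 (\<bar>X x\<bar> - real n)"
  have Xm: "X \<in> borel_measurable M" using X by auto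
  have "(\<lambda>n. \<integral>x. ?s n x \<partial>M) \<longlonglongrightarrow> (\<integral>x. 0 \<partial>M)"
  proof (rule integral_dominated_convergence[where w="\<lambda>x. \<bar>X x\<bar>"])
    show "integrable M (\<lambda>x. \<bar>X x\<bar>)" using X by auto
    show "\<And>n. ?s n \<in> borel_measurable M" using Xm by measurable
    show "AE x in M. (\<lambda>n. ?s n x) \<longlonglongrightarrow> 0"
    proof (rule AE_I2)
      fix x
      have "eventually (\<lambda>n. ?s n x = 0) sequentially"
        using eventually_ge_at_top[of "nat \<lceil>\<bar>X x\<bar>\<rceil>"]
      proof eventually_elim
        case (elim n)
        have "\<bar>X x\<bar> \<le> real (nat \<lceil>\<bar>X x\<bar>\<rceil>)" by (rule real_nat_ceiling_ge)
        also have "\<dots> \<le> real n" using elim by (simp only: of_nat_le_iff)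
        finally show ?case by simp
      qed
      then show "(\<lambda>n. ?s n x) \<longlonglongrightarrow> 0" by (rule tendsto_eventually)
    qed
    show "\<And>n. AE x in M. norm (?s n x) \<le> \<bar>X x\<bar>" by (auto intro!: AE_I2)
  qed simp
  then have "eventually (\<lambda>n. (\<integral>x. ?s n x \<partial>M) < \<delta>) sequentially"
    using d by (simp add: order_tendstoD(2))
  moreover have "eventually (\<lambda>n::nat. 1 \<le> n) sequentially" by (rule eventually_ge_at_top)
  ultimately have "eventually (\<lambda>n. 1 \<le> n \<and> (\<integral>x. ?s n x \<partial>M) < \<delta>) sequentially"
    by eventually_elim auto
  then obtain n where "1 \<le> n" "(\<integral>x. ?s n x \<partial>M) < \<delta>"
    using eventually_sequentially by auto
  then show ?thesis by (intro exI[of _ "real n"]) auto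
qed

section \<open>The observation model\<close>

lemma prob_space_density_pdf:
  assumes "f \<in> borel_measurable M" "(\<integral>\<^sup>+ x. ennreal (f x) \<partial>M) = 1"
  shows "prob_space (density M (\<lambda>x. ennreal (f x)))"
proof (rule prob_spaceI)
  have "emeasure (density M (\<lambda>x. ennreal (f x))) (space M) = (\<integral>\<^sup>+ x. ennreal (f x) \<partial>M)"
    using assms(1) by (subst emeasure_density) (auto intro!: nn_integral_cong)
  then show "emeasure (density M (\<lambda>x. ennreal (f x))) (space (density M (\<lambda>x. ennreal (f x)))) = 1"
    using assms(2) by simp
qed

definition obs_factor :: "'b measure \<Rightarrow> ('b \<Rightarrow> real) \<Rightarrow> ('b \<Rightarrow> real) \<Rightarrow> nat list \<Rightarrow> nat \<times> nat \<Rightarrow> 'b measure" where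
  "obs_factor \<mu> f0 f1 gs = (\<lambda>(k, l). density \<mu> (\<lambda>x. ennreal (if k < gs ! (l - 1) then f0 x else f1 x)))"

lemma obs_law_factors: "obs_law \<mu> f0 f1 L gs = PiM (obs_index L) (obs_factor \<mu> f0 f1 gs)"
  unfolding obs_law_def obs_factor_def ..

definition rows :: "nat \<Rightarrow> nat \<Rightarrow> (nat \<times> nat) set" where
  "rows L n = {..<n} \<times> {1..L}"

lemma finite_rows[simp]: "finite (rows L n)" by (simp add: rows_def)
lemma rows_subset: "rows L n \<subseteq> obs_index L" by (auto simp: rows_def obs_index_def)

locale setting =
  fixes \<mu> :: "'b measure" and f0 f1 :: "'b \<Rightarrow> real" and L :: nat
  assumes L: "L \<ge> 1"
    and f0: "f0 \<in> borel_measurable \<mu>" "\<And>x. x \<in> space \<mu> \<Longrightarrow> 0 \<le> f0 x"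
            "(\<integral>\<^sup>+ x. ennreal (f0 x) \<partial>\<mu>) = 1"
    and f1: "f1 \<in> borel_measurable \<mu>" "\<And>x. x \<in> space \<mu> \<Longrightarrow> 0 \<le> f1 x"
            "(\<integral>\<^sup>+ x. ennreal (f1 x) \<partial>\<mu>) = 1"
    and mac: "AE x in \<mu>. (f0 x = 0 \<longleftrightarrow> f1 x = 0)"
    and KL_fin: "integrable \<mu> (\<lambda>x. f1 x * ln (f1 x / f0 x))"
begin

abbreviation "\<nu>0 \<equiv> density \<mu> (\<lambda>x. ennreal (f0 x))"
abbreviation "\<nu>1 \<equiv> density \<mu> (\<lambda>x. ennreal (f1 x))"
abbreviation "I \<equiv> obs_index L"
abbreviation "\<Omega> \<equiv> space (obs_space \<mu> L)"
abbreviation "PS \<equiv> count_space UNIV \<Otimes>\<^sub>M obs_space \<mu> L"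

lemma f0_meas[measurable]: "f0 \<in> borel_measurable \<mu>" and f1_meas[measurable]: "f1 \<in> borel_measurable \<mu>"
  using f0 f1 by auto

lemma prob_nu0: "prob_space \<nu>0" using f0 by (intro prob_space_density_pdf) auto
lemma prob_nu1: "prob_space \<nu>1" using f1 by (intro prob_space_density_pdf) auto

lemma obs_factor_eq: "obs_factor \<mu> f0 f1 gs j = (if fst j < gs ! (snd j - 1) then \<nu>0 else \<nu>1)"
  by (cases j) (auto simp: obs_factor_def)

lemma prob_obs_factor: "prob_space (obs_factor \<mu> f0 f1 gs j)"
  using prob_nu0 prob_nu1 by (simp add: obs_factor_eq)

lemma sets_obs_factor[simp]: "sets (obs_factor \<mu> f0 f1 gs j) = sets \<mu>"
  and space_obs_factor[simp]: "space (obs_factor \<mu> f0 f1 gs j) = space \<mu>"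
  by (simp_all add: obs_factor_eq)

lemma sets_obs_law[simp]: "sets (obs_law \<mu> f0 f1 L gs) = sets (obs_space \<mu> L)"
  unfolding obs_law_factors obs_space_def by (rule sets_PiM_cong) auto

lemma space_obs_law[simp]: "space (obs_law \<mu> f0 f1 L gs) = \<Omega>"
  using sets_obs_law by (rule sets_eq_imp_space_eq)

lemma prob_obs_law: "prob_space (obs_law \<mu> f0 f1 L gs)"
  unfolding obs_law_factors by (rule prob_space_PiM) (rule prob_obs_factor)

definition obs_kernel :: "nat list \<Rightarrow> (nat list \<times> ((nat \<times> nat) \<Rightarrow> 'b)) measure" where
  "obs_kernel gs = distr (obs_law \<mu> f0 f1 L gs) PS (\<lambda>z. (gs, z))"

lemma prob_obs_kernel: "prob_space (obs_kernel gs)"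
  and obs_kernel_space: "obs_kernel gs \<in> space (subprob_algebra PS)"
proof -
  interpret prob_space "obs_law \<mu> f0 f1 L gs" by (rule prob_obs_law)
  have m: "(\<lambda>z. (gs, z)) \<in> measurable (obs_law \<mu> f0 f1 L gs) PS"
    by (auto intro!: measurable_Pair simp: measurable_cong_sets[OF sets_obs_law refl])
  show "prob_space (obs_kernel gs)" unfolding obs_kernel_def by (rule prob_space_distr[OF m])
  then show "obs_kernel gs \<in> space (subprob_algebra PS)"
    unfolding obs_kernel_def by (auto simp: space_subprob_algebra prob_space_imp_subprob_space)
qed

lemma obs_kernel_measurable: "obs_kernel \<in> measurable (measure_pmf p) (subprob_algebra PS)"
  using obs_kernel_space by simp

lemma model_eq: "model \<mu> f0 f1 L first r = measure_pmf (cp_pmf first r L) \<bind> obs_kernel"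
  unfolding model_def obs_kernel_def ..

lemma sets_model[simp]: "sets (model \<mu> f0 f1 L first r) = sets PS"
  unfolding model_eq by (rule sets_bind_measurable[OF obs_kernel_measurable]) simp

lemma space_model[simp]: "space (model \<mu> f0 f1 L first r) = space PS"
  using sets_model by (rule sets_eq_imp_space_eq)

lemma space_PS: "space PS = UNIV \<times> \<Omega>" by (simp add: space_pair_measure)

lemma prob_model: "prob_space (model \<mu> f0 f1 L first r)"
  unfolding model_eq
  by (rule prob_space.prob_space_bind[where S=PS])
    (auto simp: obs_kernel_measurable measure_pmf.prob_space_axioms prob_obs_kernel obs_kernel_space)

lemma emeasure_model:
  assumes X: "X \<in> sets PS"
  shows "emeasure (model \<mu> f0 f1 L first r) X =
    (\<integral>\<^sup>+gs. emeasure (obs_law \<mu> f0 f1 L gs) {z \<in> \<Omega>. (gs, z) \<in> X} \<partial>measure_pmf (cp_pmf first r L))"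
proof -
  have "emeasure (model \<mu> f0 f1 L first r) X = (\<integral>\<^sup>+gs. emeasure (obs_kernel gs) X \<partial>measure_pmf (cp_pmf first r L))"
    unfolding model_eq by (rule emeasure_bind[OF _ obs_kernel_measurable X]) simp
  also have "\<dots> = (\<integral>\<^sup>+gs. emeasure (obs_law \<mu> f0 f1 L gs) {z \<in> \<Omega>. (gs, z) \<in> X} \<partial>measure_pmf (cp_pmf first r L))"
  proof (rule nn_integral_cong)
    fix gs
    have m: "(\<lambda>z. (gs, z)) \<in> measurable (obs_law \<mu> f0 f1 L gs) PS"
      by (auto intro!: measurable_Pair simp: measurable_cong_sets[OF sets_obs_law refl])
    show "emeasure (obs_kernel gs) X = emeasure (obs_law \<mu> f0 f1 L gs) {z \<in> \<Omega>. (gs, z) \<in> X}"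
      unfolding obs_kernel_def using emeasure_distr[OF m X] by (simp add: vimage_def Int_def conj_commute)
  qed
  finally show ?thesis .
qed

lemma obs_law_cylinder:
  assumes J: "J \<subseteq> I" "finite J" and B: "B \<in> sets (PiM J (\<lambda>_. \<mu>))"
  shows "emeasure (obs_law \<mu> f0 f1 L gs) (prod_emb I (\<lambda>_. \<mu>) J B) = emeasure (PiM J (obs_factor \<mu> f0 f1 gs)) B"
proof -
  interpret P: product_prob_space "obs_factor \<mu> f0 f1 gs" I
    by (rule product_prob_spaceI) (rule prob_obs_factor)
  have e: "prod_emb I (\<lambda>_. \<mu>) J B = prod_emb I (obs_factor \<mu> f0 f1 gs) J B"
    by (simp add: prod_emb_def)
  have B': "B \<in> sets (PiM J (obs_factor \<mu> f0 f1 gs))"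
    using B by (subst sets_PiM_cong[OF refl]) auto
  show ?thesis unfolding e obs_law_factors by (rule P.emeasure_PiM_emb'[OF J B'])
qed

section \<open>Stopping times of the observation filtration\<close>

lemma space_obs_space: "\<Omega> = (\<Pi>\<^sub>E i\<in>I. space \<mu>)"
  by (simp add: obs_space_def space_PiM)

lemma sets_obs_filtration: "sets (obs_filtration \<mu> L t) = sigma_sets \<Omega> {(\<lambda>\<omega>. \<omega> (k, l)) -` B \<inter> \<Omega> | k l B.
        enat k \<le> t \<and> l \<in> {1..L} \<and> B \<in> sets \<mu>}"
  unfolding obs_filtration_def by (rule sets_measure_of) auto

lemma space_obs_filtration[simp]: "space (obs_filtration \<mu> L t) = \<Omega>"
  unfolding obs_filtration_def by (rule space_measure_of) auto

text \<open>Every event of F_m is a cylinder over the first m + 1 rows: the generators are, and the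
  cylinders over a fixed finite index set form a sigma-algebra.\<close>

lemma filtration_cylinder:
  assumes A: "A \<in> sets (obs_filtration \<mu> L (enat m))"
  shows "\<exists>B \<in> sets (PiM (rows L (Suc m)) (\<lambda>_. \<mu>)). A = prod_emb I (\<lambda>_. \<mu>) (rows L (Suc m)) B"
proof -
  let ?J = "rows L (Suc m)"
  have A': "A \<in> sigma_sets \<Omega> {(\<lambda>\<omega>. \<omega> (k, l)) -` B \<inter> \<Omega> | k l B.
        enat k \<le> enat m \<and> l \<in> {1..L} \<and> B \<in> sets \<mu>}" using A sets_obs_filtration by simp
  have JI: "?J \<subseteq> I" by (rule rows_subset)
  have Om: "prod_emb I (\<lambda>_. \<mu>) ?J (space (PiM ?J (\<lambda>_. \<mu>))) = \<Omega>"
    using JI by (force simp: prod_emb_def space_obs_space space_PiM PiE_iff)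
  from A' show ?thesis
  proof induction
    case (Basic a)
    then obtain k l Bm where a: "a = (\<lambda>\<omega>. \<omega> (k, l)) -` Bm \<inter> \<Omega>" and kl: "k \<le> m" "l \<in> {1..L}"
      and Bm: "Bm \<in> sets \<mu>" by auto
    have kJ: "(k, l) \<in> ?J" using kl by (auto simp: rows_def)
    let ?B = "{x \<in> space (PiM ?J (\<lambda>_. \<mu>)). x (k, l) \<in> Bm}"
    have "?B \<in> sets (PiM ?J (\<lambda>_. \<mu>))"
      using kJ Bm by measurable
    moreover have "a = prod_emb I (\<lambda>_. \<mu>) ?J ?B"
      using kJ JI by (auto simp: a prod_emb_def space_obs_space space_PiM PiE_iff)
    ultimately show ?case by blast
  next
    case Empty
    then show ?case by (intro bexI[of _ "{}"]) auto
  next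
    case (Compl a)
    then obtain B where B: "B \<in> sets (PiM ?J (\<lambda>_. \<mu>))" "a = prod_emb I (\<lambda>_. \<mu>) ?J B" by blast
    have "\<Omega> - a = prod_emb I (\<lambda>_. \<mu>) ?J (space (PiM ?J (\<lambda>_. \<mu>)) - B)"
      using B(2) Om by simp
    then show ?case using B(1) by blast
  next
    case (Union a)
    then have "\<forall>i. \<exists>B. B \<in> sets (PiM ?J (\<lambda>_. \<mu>)) \<and> a i = prod_emb I (\<lambda>_. \<mu>) ?J B" by blast
    then obtain B where B: "\<And>i. B i \<in> sets (PiM ?J (\<lambda>_. \<mu>))" "\<And>i. a i = prod_emb I (\<lambda>_. \<mu>) ?J (B i)"
      by metis
    have "(\<Union>i. a i) = prod_emb I (\<lambda>_. \<mu>) ?J (\<Union>i. B i)" using B(2) by simp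
    moreover have "(\<Union>i. B i) \<in> sets (PiM ?J (\<lambda>_. \<mu>))" using B(1) by auto
    ultimately show ?case by blast
  qed
qed

text \<open>Since {tau < N} = {tau \<le> N - 1} lies in F_(N-1), it is a cylinder over the first N rows.\<close>

lemma stopping_cylinder:
  assumes st: "stopping_time (obs_filtration \<mu> L) \<tau>" and N: "N \<ge> 1"
  shows "\<exists>B \<in> sets (PiM (rows L N) (\<lambda>_. \<mu>)).
           {z \<in> \<Omega>. \<tau> z < enat N} = prod_emb I (\<lambda>_. \<mu>) (rows L N) B"
proof -
  obtain m where m: "N = Suc m" using N by (cases N) auto
  have "Measurable.pred (obs_filtration \<mu> L (enat m)) (\<lambda>x. \<tau> x \<le> enat m)"
    using st unfolding stopping_time_def by blast
  then have "{z \<in> \<Omega>. \<tau> z \<le> enat m} \<in> sets (obs_filtration \<mu> L (enat m))"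
    unfolding pred_def by simp
  moreover have "\<tau> z < enat (Suc m) \<longleftrightarrow> \<tau> z \<le> enat m" for z by (cases "\<tau> z") auto
  then have "{z \<in> \<Omega>. \<tau> z < enat N} = {z \<in> \<Omega>. \<tau> z \<le> enat m}" unfolding m by blast
  ultimately show ?thesis using filtration_cylinder[of "{z \<in> \<Omega>. \<tau> z \<le> enat m}" m] unfolding m by simp
qed

lemma stopping_event_sets:
  assumes st: "stopping_time (obs_filtration \<mu> L) \<tau>"
  shows "{z \<in> \<Omega>. \<tau> z < enat N} \<in> sets (obs_space \<mu> L)"
proof (cases "N = 0")
  case True
  then show ?thesis by (simp add: zero_enat_def[symmetric])
next
  case False
  then obtain B where B: "B \<in> sets (PiM (rows L N) (\<lambda>_. \<mu>))"
    and eq: "{z \<in> \<Omega>. \<tau> z < enat N} = prod_emb I (\<lambda>_. \<mu>) (rows L N) B"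
    using stopping_cylinder[OF st, of N] by auto
  have "prod_emb I (\<lambda>_. \<mu>) (rows L N) B = (\<lambda>f. restrict f (rows L N)) -` B \<inter> space (PiM I (\<lambda>_. \<mu>))"
    by (simp add: prod_emb_def space_PiM)
  also have "\<dots> \<in> sets (PiM I (\<lambda>_. \<mu>))"
    by (rule measurable_sets[OF measurable_restrict_subset[OF rows_subset] B])
  finally show ?thesis using eq by (simp add: obs_space_def)
qed

lemma stopping_event_pair_sets:
  assumes st: "stopping_time (obs_filtration \<mu> L) \<tau>"
  shows "{p \<in> space PS. \<tau> (snd p) < enat N} \<in> sets PS"
proof -
  have "{p \<in> space PS. \<tau> (snd p) < enat N} = UNIV \<times> {z \<in> \<Omega>. \<tau> z < enat N}"
    by (auto simp: space_PS)
  also have "\<dots> \<in> sets PS" by (rule pair_measureI) (auto intro: stopping_event_sets[OF st])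
  finally show ?thesis .
qed

section \<open>Likelihood ratios and change of measure\<close>

definition mixed_law :: "(nat \<times> nat) set \<Rightarrow> nat \<times> nat \<Rightarrow> 'b measure" where
  "mixed_law S j = (if j \<in> S then \<nu>1 else \<nu>0)"

definition lr :: "'b \<Rightarrow> real" where "lr x = f1 x / f0 x"

lemma lr_meas[measurable]: "lr \<in> borel_measurable \<mu>" unfolding lr_def by measurable

lemma lr_nonneg: "x \<in> space \<mu> \<Longrightarrow> 0 \<le> lr x"
  unfolding lr_def using f0(2) f1(2) by simp

lemma prob_mixed_law: "prob_space (mixed_law S j)"
  using prob_nu0 prob_nu1 by (simp add: mixed_law_def)

lemma sets_mixed_law[simp]: "sets (mixed_law S j) = sets \<mu>" and space_mixed_law[simp]: "space (mixed_law S j) = space \<mu>"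
  by (simp_all add: mixed_law_def)

text \<open>Since f0 and f1 have the same null sets, nu1 has density f1/f0 with respect to nu0.\<close>

lemma nu1_density: "\<nu>1 = density \<nu>0 (\<lambda>x. ennreal (lr x))"
proof -
  have "density \<nu>0 (\<lambda>x. ennreal (lr x)) = density \<mu> (\<lambda>x. ennreal (f0 x) * ennreal (lr x))"
    by (rule density_density_eq) auto
  also have "\<dots> = \<nu>1"
  proof (rule density_cong)
    show "AE x in \<mu>. ennreal (f0 x) * ennreal (lr x) = ennreal (f1 x)"
      using mac AE_space
    proof eventually_elim
      case (elim x)
      show ?case
      proof (cases "f0 x = 0")
        case True then show ?thesis using elim by (simp add: lr_def)
      next
        case False
        then show ?thesis using elim by (simp add: lr_def ennreal_mult[symmetric] f0(2) f1(2))
      qed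
    qed
  qed auto
  finally show ?thesis ..
qed

lemma mixed_law_density:
  assumes J: "finite J" and S: "S \<subseteq> J"
  shows "PiM J (mixed_law S) = density (PiM J (\<lambda>_. \<nu>0)) (\<lambda>z. \<Prod>j\<in>S. ennreal (lr (z j)))"
proof -
  interpret P: product_prob_space "mixed_law S" J by (rule product_prob_spaceI) (rule prob_mixed_law)
  interpret Q: product_prob_space "\<lambda>_. \<nu>0" J by (rule product_prob_spaceI) (rule prob_nu0)
  let ?h = "\<lambda>j x. if j \<in> S then ennreal (lr x) else 1"
  show ?thesis
  proof (rule P.PiM_eqI[symmetric, OF J])
    show "sets (density (PiM J (\<lambda>_. \<nu>0)) (\<lambda>z. \<Prod>j\<in>S. ennreal (lr (z j)))) = sets (PiM J (mixed_law S))"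
      by (simp, rule sets_PiM_cong) auto
    fix A assume A: "\<And>i. i \<in> J \<Longrightarrow> A i \<in> sets (mixed_law S i)"
    have A': "Pi\<^sub>E J A \<in> sets (PiM J (\<lambda>_. \<nu>0))"
      using A by (intro sets_PiM_I_finite J) auto
    have "emeasure (density (PiM J (\<lambda>_. \<nu>0)) (\<lambda>z. \<Prod>j\<in>S. ennreal (lr (z j)))) (Pi\<^sub>E J A)
       = (\<integral>\<^sup>+ z. (\<Prod>j\<in>S. ennreal (lr (z j))) * indicator (Pi\<^sub>E J A) z \<partial>PiM J (\<lambda>_. \<nu>0))"
      by (rule emeasure_density[OF _ A'])
         (use S in \<open>auto intro!: borel_measurable_prod_ennreal measurable_compose[OF measurable_component_singleton]\<close>)
    also have "\<dots> = (\<integral>\<^sup>+ z. (\<Prod>j\<in>J. ?h j (z j) * indicator (A j) (z j)) \<partial>PiM J (\<lambda>_. \<nu>0))"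
    proof (rule nn_integral_cong)
      fix z assume z: "z \<in> space (PiM J (\<lambda>_. \<nu>0))"
      have "(\<Prod>j\<in>S. ennreal (lr (z j))) = (\<Prod>j\<in>J. ?h j (z j))"
        by (rule prod.mono_neutral_cong_left[OF J S]) auto
      moreover have "indicator (Pi\<^sub>E J A) z = (\<Prod>j\<in>J. indicator (A j) (z j) :: ennreal)"
        using z J by (auto simp: space_PiM indicator_def PiE_iff prod_zero_iff split: if_splits)
      ultimately show "(\<Prod>j\<in>S. ennreal (lr (z j))) * indicator (Pi\<^sub>E J A) z =
          (\<Prod>j\<in>J. ?h j (z j) * indicator (A j) (z j))"
        by (simp add: prod.distrib)
    qed
    also have "\<dots> = (\<Prod>j\<in>J. \<integral>\<^sup>+ x. ?h j x * indicator (A j) x \<partial>\<nu>0)"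
    proof (intro Q.product_nn_integral_prod J)
      fix j assume j: "j \<in> J"
      have "A j \<in> sets \<mu>" using A[OF j] by simp
      then show "(\<lambda>x. ?h j x * indicator (A j) x) \<in> borel_measurable \<nu>0" by simp
    qed
    also have "\<dots> = (\<Prod>j\<in>J. emeasure (mixed_law S j) (A j))"
    proof (rule prod.cong[OF refl])
      fix j assume j: "j \<in> J"
      show "(\<integral>\<^sup>+ x. ?h j x * indicator (A j) x \<partial>\<nu>0) = emeasure (mixed_law S j) (A j)"
      proof (cases "j \<in> S")
        case True
        then show ?thesis using A[OF j]
          by (simp add: mixed_law_def, subst nu1_density, subst emeasure_density) auto
      next
        case False
        then show ?thesis using A[OF j]
          by (simp add: mixed_law_def nn_integral_indicator)
      qed
    qed
    finally show "emeasure (density (PiM J (\<lambda>_. \<nu>0)) (\<lambda>z. \<Prod>j\<in>S. ennreal (lr (z j)))) (Pi\<^sub>E J A) =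
      (\<Prod>j\<in>J. emeasure (mixed_law S j) (A j))" .
  qed
qed

lemma llr_exceeds:
  assumes J: "finite J" and S: "S \<subseteq> J" and z: "z \<in> space (PiM J (\<lambda>_. \<mu>))"
    and gt: "ennreal (exp C) < (\<Prod>j\<in>S. ennreal (lr (z j)))"
  shows "C < (\<Sum>j\<in>S. ln (lr (z j)))"
proof -
  have zs: "\<And>j. j \<in> S \<Longrightarrow> z j \<in> space \<mu>" using z S by (auto simp: space_PiM PiE_iff)
  have nn: "\<And>j. j \<in> S \<Longrightarrow> 0 \<le> lr (z j)" using zs lr_nonneg by blast
  have pos: "\<And>j. j \<in> S \<Longrightarrow> 0 < lr (z j)"
  proof (rule ccontr)
    fix j assume j: "j \<in> S" "\<not> 0 < lr (z j)"
    then have "lr (z j) = 0" using nn[OF j(1)] by simp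
    then have "(\<Prod>j\<in>S. ennreal (lr (z j))) = 0" using j(1) finite_subset[OF S J] by (auto simp: ennreal_prod_eq_0 intro!: bexI[of _ j])
    with gt show False by simp
  qed
  have "(\<Prod>j\<in>S. ennreal (lr (z j))) = ennreal (\<Prod>j\<in>S. lr (z j))"
    using nn by (rule prod_ennreal)
  also have "(\<Prod>j\<in>S. lr (z j)) = exp (\<Sum>j\<in>S. ln (lr (z j)))"
    using pos finite_subset[OF S J] by (simp add: exp_sum)
  finally have "ennreal (exp C) < ennreal (exp (\<Sum>j\<in>S. ln (lr (z j))))" using gt by simp
  then have "exp C < exp (\<Sum>j\<in>S. ln (lr (z j)))" by (simp add: ennreal_less_iff)
  then show ?thesis by simp
qed

lemma change_of_measure:
  assumes J: "finite J" and S: "S \<subseteq> J" and B: "B \<in> sets (PiM J (\<lambda>_. \<mu>))"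
  shows "emeasure (PiM J (mixed_law S)) B \<le> ennreal (exp C) * emeasure (PiM J (\<lambda>_. \<nu>0)) B +
     emeasure (PiM J (mixed_law S)) {z \<in> space (PiM J (\<lambda>_. \<mu>)). C < (\<Sum>j\<in>S. ln (lr (z j)))}"
proof -
  let ?P = "PiM J (mixed_law S)" and ?Q = "PiM J (\<lambda>_. \<nu>0)"
  let ?\<Lambda> = "\<lambda>z. \<Prod>j\<in>S. ennreal (lr (z j))"
  let ?T = "{z \<in> space (PiM J (\<lambda>_. \<mu>)). C < (\<Sum>j\<in>S. ln (lr (z j)))}"
  have sP: "sets ?P = sets (PiM J (\<lambda>_. \<mu>))" by (rule sets_PiM_cong) auto
  have sQ: "sets ?Q = sets (PiM J (\<lambda>_. \<mu>))" by (rule sets_PiM_cong) auto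
  have spQ: "space ?Q = space (PiM J (\<lambda>_. \<mu>))" by (rule sets_eq_imp_space_eq[OF sQ])
  have Lm: "?\<Lambda> \<in> borel_measurable (PiM J (\<lambda>_. \<mu>))"
    using S by (auto intro!: borel_measurable_prod_ennreal measurable_compose[OF measurable_component_singleton])
  have Lm': "?\<Lambda> \<in> borel_measurable ?Q" using Lm by (simp add: measurable_cong_sets[OF sQ refl])
  define G where "G = {z \<in> space (PiM J (\<lambda>_. \<mu>)). ?\<Lambda> z \<le> ennreal (exp C)}"
  have Gm: "G \<in> sets (PiM J (\<lambda>_. \<mu>))" unfolding G_def using Lm by measurable
  have Tm: "?T \<in> sets (PiM J (\<lambda>_. \<mu>))"
  proof -
    have "(\<lambda>z. \<Sum>j\<in>S. ln (lr (z j))) \<in> borel_measurable (PiM J (\<lambda>_. \<mu>))"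
      using S by (auto intro!: borel_measurable_sum borel_measurable_ln measurable_compose[OF measurable_component_singleton])
    then show ?thesis by measurable
  qed
  have sub: "B \<subseteq> (B \<inter> G) \<union> ?T"
  proof
    fix z assume zB: "z \<in> B"
    have z: "z \<in> space (PiM J (\<lambda>_. \<mu>))" using sets.sets_into_space[OF B] zB by auto
    show "z \<in> (B \<inter> G) \<union> ?T"
    proof (cases "z \<in> G")
      case False
      then have "ennreal (exp C) < ?\<Lambda> z" using z by (auto simp: G_def not_le)
      then show ?thesis using llr_exceeds[OF J S z] z by auto
    qed (use zB in auto)
  qed
  have "emeasure ?P B \<le> emeasure ?P ((B \<inter> G) \<union> ?T)"
    using sub B Gm Tm sP by (intro emeasure_mono) auto
  also have "\<dots> \<le> emeasure ?P (B \<inter> G) + emeasure ?P ?T"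
    using B Gm Tm sP by (intro emeasure_subadditive) auto
  also have "emeasure ?P (B \<inter> G) = (\<integral>\<^sup>+ z. ?\<Lambda> z * indicator (B \<inter> G) z \<partial>?Q)"
    unfolding mixed_law_density[OF J S] using B Gm sQ Lm' by (subst emeasure_density) auto
  also have "\<dots> \<le> (\<integral>\<^sup>+ z. ennreal (exp C) * indicator B z \<partial>?Q)"
  proof (rule nn_integral_mono)
    fix z assume z: "z \<in> space ?Q"
    show "?\<Lambda> z * indicator (B \<inter> G) z \<le> ennreal (exp C) * indicator B z"
      using z spQ by (auto simp: G_def indicator_def)
  qed
  also have "\<dots> = ennreal (exp C) * emeasure ?Q B"
    using B sQ by (subst nn_integral_cmult_indicator) auto
  finally show ?thesis by (simp add: add_mono)
qed


section \<open>Bounds on the probability of stopping before time N\<close>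

lemma obs_factor_prechange:
  assumes gs: "gs \<in> set_pmf (cp_pmf first r L)" and hd: "hd gs = N"
  shows "PiM (rows L N) (obs_factor \<mu> f0 f1 gs) = PiM (rows L N) (\<lambda>_. \<nu>0)"
proof (rule PiM_cong[OF refl])
  have props: "length gs = L" "\<forall>i<L. hd gs \<le> gs ! i" using cp_pmf_props[OF L] gs by auto
  fix j assume "j \<in> rows L N"
  then have "fst j < N" "snd j - 1 < L" using L by (auto simp: rows_def)
  then have "fst j < gs ! (snd j - 1)" using props hd by (meson less_le_trans)
  then show "obs_factor \<mu> f0 f1 gs j = \<nu>0" by (simp add: obs_factor_eq)
qed

text \<open>The post-change observations among the first N rows.  As every stream changes no earlier
  than the first one, there are at most L (N - Gamma_1) of them.\<close>

definition post_change :: "nat list \<Rightarrow> nat \<Rightarrow> (nat \<times> nat) set" where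
  "post_change gs N = {j \<in> rows L N. gs ! (snd j - 1) \<le> fst j}"

lemma obs_factor_mixed:
  "PiM (rows L N) (obs_factor \<mu> f0 f1 gs) = PiM (rows L N) (mixed_law (post_change gs N))"
  by (rule PiM_cong[OF refl]) (auto simp: obs_factor_eq mixed_law_def post_change_def not_le)

lemma card_post_change:
  assumes gs: "gs \<in> set_pmf (cp_pmf first r L)"
  shows "card (post_change gs N) \<le> L * (N - hd gs)"
proof -
  have props: "length gs = L" "\<forall>i<L. hd gs \<le> gs ! i" using cp_pmf_props[OF L] gs by auto
  have "post_change gs N \<subseteq> {hd gs..<N} \<times> {1..L}"
  proof
    fix j assume j: "j \<in> post_change gs N"
    then have "snd j - 1 < L" "fst j < N" "snd j \<in> {1..L}" using L by (auto simp: post_change_def rows_def)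
    then have "hd gs \<le> gs ! (snd j - 1)" using props by auto
    then show "j \<in> {hd gs..<N} \<times> {1..L}" using j \<open>fst j < N\<close> \<open>snd j \<in> {1..L}\<close>
      by (cases j) (auto simp: post_change_def)
  qed
  then have "card (post_change gs N) \<le> card ({hd gs..<N} \<times> {1..L})" by (intro card_mono) auto
  then show ?thesis by (simp add: card_cartesian_product mult.commute)
qed

text \<open>Lower bound on the false-alarm probability: with probability rho (1 - rho)^N the first
  change is at time N, and then stopping before N has the pre-change probability of B.\<close>

lemma false_alarm_lower:
  assumes st: "stopping_time (obs_filtration \<mu> L) \<tau>"
    and B: "B \<in> sets (PiM (rows L N) (\<lambda>_. \<mu>))"
    and eq: "{z \<in> \<Omega>. \<tau> z < enat N} = prod_emb I (\<lambda>_. \<mu>) (rows L N) B"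
    and rho: "0 < \<rho>" "\<rho> < 1"
  shows "ennreal ((1 - \<rho>) ^ N * \<rho>) * emeasure (PiM (rows L N) (\<lambda>_. \<nu>0)) B \<le>
     emeasure (model \<mu> f0 f1 L (geometric_pmf \<rho>) r)
       {p \<in> space (model \<mu> f0 f1 L (geometric_pmf \<rho>) r). \<tau> (snd p) < enat (hd (fst p))}"
proof -
  let ?cp = "cp_pmf (geometric_pmf \<rho>) r L"
  let ?X = "{p \<in> space PS. \<tau> (snd p) < enat (hd (fst p))}"
  let ?q = "emeasure (PiM (rows L N) (\<lambda>_. \<nu>0)) B"
  have Xeq: "?X = (\<Union>gs. {gs} \<times> {z \<in> \<Omega>. \<tau> z < enat (hd gs)})" by (auto simp: space_PS)
  have Xm: "?X \<in> sets PS"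
  proof -
    have "{gs} \<times> {z \<in> \<Omega>. \<tau> z < enat (hd gs)} \<in> sets PS" for gs
      by (rule pair_measureI) (auto intro: stopping_event_sets[OF st])
    then show ?thesis unfolding Xeq by (intro sets.countable_UN) auto
  qed
  have "emeasure (model \<mu> f0 f1 L (geometric_pmf \<rho>) r) ?X =
     (\<integral>\<^sup>+gs. emeasure (obs_law \<mu> f0 f1 L gs) {z \<in> \<Omega>. (gs, z) \<in> ?X} \<partial>measure_pmf ?cp)"
    by (rule emeasure_model[OF Xm])
  also have "\<dots> = (\<integral>\<^sup>+gs. emeasure (obs_law \<mu> f0 f1 L gs) {z \<in> \<Omega>. \<tau> z < enat (hd gs)} \<partial>measure_pmf ?cp)"
    by (intro nn_integral_cong arg_cong2[where f=emeasure] refl) (auto simp: space_PS)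
  also have "\<dots> \<ge> (\<integral>\<^sup>+gs. ?q * indicator {gs. hd gs = N} gs \<partial>measure_pmf ?cp)"
  proof (rule nn_integral_mono_AE)
    show "AE gs in measure_pmf ?cp. ?q * indicator {gs. hd gs = N} gs
        \<le> emeasure (obs_law \<mu> f0 f1 L gs) {z \<in> \<Omega>. \<tau> z < enat (hd gs)}"
      unfolding AE_measure_pmf_iff
    proof
      fix gs assume gs: "gs \<in> set_pmf ?cp"
      show "?q * indicator {gs. hd gs = N} gs \<le> emeasure (obs_law \<mu> f0 f1 L gs) {z \<in> \<Omega>. \<tau> z < enat (hd gs)}"
      proof (cases "hd gs = N")
        case True
        then show ?thesis
          using obs_law_cylinder[OF rows_subset finite_rows B, of gs] obs_factor_prechange[OF gs True]
          by (simp add: eq)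
      qed simp
    qed
  qed
  also have "(\<integral>\<^sup>+gs. ?q * indicator {gs. hd gs = N} gs \<partial>measure_pmf ?cp) = ?q * emeasure (measure_pmf ?cp) {gs. hd gs = N}"
    by (rule nn_integral_cmult_indicator) simp
  also have "emeasure (measure_pmf ?cp) {gs. hd gs = N} = emeasure (measure_pmf (map_pmf hd ?cp)) {N}"
    by (simp add: vimage_def)
  also have "\<dots> = ennreal ((1 - \<rho>) ^ N * \<rho>)"
    using cp_pmf_props[OF L] rho by (simp add: emeasure_pmf_single)
  finally show ?thesis by (simp add: space_PS mult.commute)
qed

lemma llr_integrable: "integrable \<nu>1 (\<lambda>x. ln (lr x))"
proof -
  have "integrable \<nu>1 (\<lambda>x. ln (lr x)) \<longleftrightarrow> integrable \<mu> (\<lambda>x. f1 x *\<^sub>R ln (lr x))"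
    by (rule integrable_density) (auto simp: f1)
  then show ?thesis using KL_fin by (simp add: lr_def)
qed

lemma llr_mean: "(\<integral>x. ln (lr x) \<partial>\<nu>1) = KL_div \<mu> f1 f0"
proof -
  have "(\<integral>x. ln (lr x) \<partial>\<nu>1) = (\<integral>x. f1 x *\<^sub>R ln (lr x) \<partial>\<mu>)"
    by (rule integral_density) (auto simp: f1)
  then show ?thesis by (simp add: KL_div_def lr_def)
qed

text \<open>Upper bound on early stopping when the first change is at time k: for each change-point
  configuration, change of measure to the all-pre-change law plus the weak law for the at most
  L (N - k) post-change log-likelihood ratios.\<close>

lemma detection_upper:
  assumes st: "stopping_time (obs_filtration \<mu> L) \<tau>" and Nk: "k < N"
    and B: "B \<in> sets (PiM (rows L N) (\<lambda>_. \<mu>))"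
    and eq: "{z \<in> \<Omega>. \<tau> z < enat N} = prod_emb I (\<lambda>_. \<mu>) (rows L N) B"
    and c: "0 < c" and eta: "0 < \<eta>"
    and D: "0 \<le> KL_div \<mu> f1 f0"
    and overshoot: "(\<integral>x. max 0 (\<bar>ln (lr x)\<bar> - c) \<partial>\<nu>1) \<le> \<eta> / 4"
  shows "emeasure (model \<mu> f0 f1 L (return_pmf k) r) {p \<in> space PS. \<tau> (snd p) < enat N} \<le>
     ennreal (exp ((KL_div \<mu> f1 f0 + \<eta>) * real (L * (N - k)))) * emeasure (PiM (rows L N) (\<lambda>_. \<nu>0)) B +
     ennreal (64 * c\<^sup>2 / (\<eta>\<^sup>2 * real (L * (N - k))) + 2 * (\<integral>x. max 0 (\<bar>ln (lr x)\<bar> - c) \<partial>\<nu>1) / \<eta>)"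
    (is "_ \<le> ennreal (exp ?C) * ?q + ennreal ?err")
proof -
  let ?cp = "cp_pmf (return_pmf k) r L"
  let ?J = "rows L N"
  let ?X = "{p \<in> space PS. \<tau> (snd p) < enat N}"
  have Mp: "0 < real (L * (N - k))" using L Nk by simp
  have bound: "emeasure (obs_law \<mu> f0 f1 L gs) {z \<in> \<Omega>. \<tau> z < enat N} \<le> ennreal (exp ?C) * ?q + ennreal ?err"
    if gs: "gs \<in> set_pmf ?cp" for gs
  proof -
    define S where "S = post_change gs N"
    have SJ: "S \<subseteq> ?J" by (auto simp: S_def post_change_def)
    have cS: "real (card S) \<le> real (L * (N - k))"
      using card_post_change[OF gs, of N] cp_pmf_props[OF L, of "return_pmf k" r] gs
      by (simp only: S_def of_nat_le_iff) auto
    interpret PP: product_prob_space "mixed_law S" ?J by (rule product_prob_spaceI) (rule prob_mixed_law)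
    have "emeasure (obs_law \<mu> f0 f1 L gs) {z \<in> \<Omega>. \<tau> z < enat N} = emeasure (PiM ?J (mixed_law S)) B"
      unfolding eq S_def obs_law_cylinder[OF rows_subset finite_rows B] obs_factor_mixed ..
    also have "\<dots> \<le> ennreal (exp ?C) * ?q +
       emeasure (PiM ?J (mixed_law S)) {z \<in> space (PiM ?J (\<lambda>_. \<mu>)). ?C < (\<Sum>j\<in>S. ln (lr (z j)))}"
      by (rule change_of_measure[OF finite_rows SJ B])
    also have "emeasure (PiM ?J (mixed_law S)) {z \<in> space (PiM ?J (\<lambda>_. \<mu>)). ?C < (\<Sum>j\<in>S. ln (lr (z j)))}
        \<le> ennreal ?err"
    proof -
      have sp: "space (PiM ?J (\<lambda>_. \<mu>)) = space (PiM ?J (mixed_law S))" by (simp add: space_PiM)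
      have "measure (PiM ?J (mixed_law S)) {z \<in> space (PiM ?J (mixed_law S)). ?C < (\<Sum>j\<in>S. ln (lr (z j)))} \<le> ?err"
        by (rule coord_sum_tail[OF PP.product_prob_space_axioms finite_rows SJ _ prob_nu1 llr_integrable c eta Mp cS])
          (use overshoot in \<open>auto simp: mixed_law_def llr_mean D\<close>)
      then show ?thesis unfolding sp by (simp add: PP.P.emeasure_eq_measure ennreal_leI del: of_nat_mult)
    qed
    finally show ?thesis by (simp add: add_mono)
  qed
  have "emeasure (model \<mu> f0 f1 L (return_pmf k) r) ?X =
     (\<integral>\<^sup>+gs. emeasure (obs_law \<mu> f0 f1 L gs) {z \<in> \<Omega>. (gs, z) \<in> ?X} \<partial>measure_pmf ?cp)"
    by (rule emeasure_model[OF stopping_event_pair_sets[OF st]])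
  also have "\<dots> = (\<integral>\<^sup>+gs. emeasure (obs_law \<mu> f0 f1 L gs) {z \<in> \<Omega>. \<tau> z < enat N} \<partial>measure_pmf ?cp)"
    by (intro nn_integral_cong arg_cong2[where f=emeasure] refl) (auto simp: space_PS)
  also have "\<dots> \<le> (\<integral>\<^sup>+gs. (ennreal (exp ?C) * ?q + ennreal ?err) \<partial>measure_pmf ?cp)"
    by (rule nn_integral_mono_AE) (use bound in \<open>auto simp: AE_measure_pmf_iff\<close>)
  also have "\<dots> = ennreal (exp ?C) * ?q + ennreal ?err"
    by (simp add: measure_pmf.emeasure_space_1)
  finally show ?thesis .
qed

end

context setting begin

lemma early_stop_bound:
  assumes st: "stopping_time (obs_filtration \<mu> L) \<tau>" and Nk: "k < N"
    and rho: "0 < \<rho>" "\<rho> < 1"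
    and false_alarm: "measure (model \<mu> f0 f1 L (geometric_pmf \<rho>) r)
       {p \<in> space (model \<mu> f0 f1 L (geometric_pmf \<rho>) r). \<tau> (snd p) < enat (hd (fst p))} \<le> \<alpha>"
    and c: "0 < c" and eta: "0 < \<eta>" and D: "0 \<le> KL_div \<mu> f1 f0"
    and overshoot: "(\<integral>x. max 0 (\<bar>ln (lr x)\<bar> - c) \<partial>\<nu>1) \<le> \<eta> / 4"
  shows "measure (model \<mu> f0 f1 L (return_pmf k) r) {p \<in> space PS. \<tau> (snd p) < enat N} \<le>
     exp ((KL_div \<mu> f1 f0 + \<eta>) * real (L * (N - k))) * (\<alpha> / ((1 - \<rho>) ^ N * \<rho>)) +
     (64 * c\<^sup>2 / (\<eta>\<^sup>2 * real (L * (N - k))) + 2 * (\<integral>x. max 0 (\<bar>ln (lr x)\<bar> - c) \<partial>\<nu>1) / \<eta>)"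
    (is "_ \<le> exp ?C * _ + ?err")
proof -
  have N1: "N \<ge> 1" using Nk by simp
  obtain B where B: "B \<in> sets (PiM (rows L N) (\<lambda>_. \<mu>))"
    and eq: "{z \<in> \<Omega>. \<tau> z < enat N} = prod_emb I (\<lambda>_. \<mu>) (rows L N) B"
    using stopping_cylinder[OF st N1] by auto
  interpret Q0: prob_space "PiM (rows L N) (\<lambda>_. \<nu>0)" by (rule prob_space_PiM) (rule prob_nu0)
  interpret Mg: prob_space "model \<mu> f0 f1 L (geometric_pmf \<rho>) r" by (rule prob_model)
  interpret Mk: prob_space "model \<mu> f0 f1 L (return_pmf k) r" by (rule prob_model)
  define q where "q = measure (PiM (rows L N) (\<lambda>_. \<nu>0)) B"
  have q0: "0 \<le> q" by (simp add: q_def)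
  have a0: "0 \<le> \<alpha>" using false_alarm measure_nonneg order_trans by blast
  have err0: "0 \<le> ?err" using c eta L Nk by (intro add_nonneg_nonneg divide_nonneg_pos) auto
  have "ennreal ((1 - \<rho>) ^ N * \<rho>) * ennreal q \<le> ennreal \<alpha>"
    using false_alarm_lower[OF st B eq rho, of r] false_alarm
    by (simp add: q_def Q0.emeasure_eq_measure Mg.emeasure_eq_measure) (erule order.trans, simp add: ennreal_leI)
  then have "(1 - \<rho>) ^ N * \<rho> * q \<le> \<alpha>"
    using rho q0 a0 by (simp add: ennreal_mult''[symmetric] ennreal_le_iff2) linarith
  then have q_le: "q \<le> \<alpha> / ((1 - \<rho>) ^ N * \<rho>)" using rho by (simp add: field_simps)
  have "ennreal (measure (model \<mu> f0 f1 L (return_pmf k) r) {p \<in> space PS. \<tau> (snd p) < enat N})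
      \<le> ennreal (exp ?C) * ennreal q + ennreal ?err"
    unfolding Mk.emeasure_eq_measure[symmetric] q_def Q0.emeasure_eq_measure[symmetric]
    by (rule detection_upper[OF st Nk B eq c eta D overshoot])
  also have "\<dots> = ennreal (exp ?C * q + ?err)"
    using q0 err0 by (simp add: ennreal_mult ennreal_plus)
  finally have "measure (model \<mu> f0 f1 L (return_pmf k) r) {p \<in> space PS. \<tau> (snd p) < enat N}
      \<le> exp ?C * q + ?err"
    using q0 err0 by (subst (asm) ennreal_le_iff) auto
  also have "\<dots> \<le> exp ?C * (\<alpha> / ((1 - \<rho>) ^ N * \<rho>)) + ?err"
    using q_le by (intro add_right_mono mult_left_mono) auto
  finally show ?thesis .
qed

lemma stop_before_measure_mono:
  assumes st: "stopping_time (obs_filtration \<mu> L) \<tau>" and P: "\<And>n. P n \<Longrightarrow> n < N"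
  shows "measure (model \<mu> f0 f1 L first r)
           {p \<in> space (model \<mu> f0 f1 L first r). R p \<and> (\<exists>n. \<tau> (snd p) = enat n \<and> P n)}
     \<le> measure (model \<mu> f0 f1 L first r) {p \<in> space PS. \<tau> (snd p) < enat N}"
proof -
  interpret prob_space "model \<mu> f0 f1 L first r" by (rule prob_model)
  have before_m: "{p \<in> space PS. \<tau> (snd p) < enat N} \<in> events"
    using stopping_event_pair_sets[OF st] by simp
  show ?thesis
  proof (cases "{p \<in> space (model \<mu> f0 f1 L first r). R p \<and> (\<exists>n. \<tau> (snd p) = enat n \<and> P n)} \<in> events")
    case True
    then show ?thesis using before_m P by (intro finite_measure_mono) auto
  qed (simp add: measure_notin_sets)
qed

end

text \<open>Choosing N - k of order (1 - eps) log(1/(rho alpha)) / (L D + |log(1 - rho)|) and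
  eta L = eps (L D + |log(1 - rho)|) / 2, the first term of early_stop_bound decays like
  (rho alpha)^(eps/2).\<close>

lemma false_alarm_exponent:
  fixes \<rho> \<alpha> \<epsilon> D \<eta> :: real and L k n :: nat
  defines "Q \<equiv> real L * D + \<bar>ln (1 - \<rho>)\<bar>"
  assumes rho: "0 < \<rho>" "\<rho> < 1" and a: "0 < \<alpha>" and eps: "0 < \<epsilon>" "\<epsilon> < 1"
    and D: "0 \<le> D" and Q: "0 < Q" and eta: "\<eta> * real L = \<epsilon> * Q / 2"
    and A: "0 \<le> ln (1 / (\<rho> * \<alpha>))"
    and n: "real n \<le> (1 - \<epsilon>) * (ln (1 / (\<rho> * \<alpha>)) / Q) + 1"
  shows "exp ((D + \<eta>) * real (L * n)) * (\<alpha> / ((1 - \<rho>) ^ (k + n) * \<rho>))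
     \<le> exp (- \<epsilon> * ln (1 / (\<rho> * \<alpha>)) / 2 + (D + \<eta>) * real L + real (Suc k) * \<bar>ln (1 - \<rho>)\<bar> - 2 * ln \<rho>)"
proof -
  define A where "A = ln (1 / (\<rho> * \<alpha>))"
  define cr where "cr = \<bar>ln (1 - \<rho>)\<bar>"
  define w where "w = (D + \<eta>) * real L + cr"
  have lncr: "ln (1 - \<rho>) = - cr" using rho by (simp add: cr_def)
  have lna: "ln \<alpha> = - A - ln \<rho>" unfolding A_def using a rho by (simp add: ln_div ln_mult)
  have w: "w = Q + \<eta> * real L" by (simp add: w_def Q_def cr_def algebra_simps)
  have "0 \<le> \<eta> * real L" unfolding eta using Q eps by simp
  then have w0: "0 \<le> w" unfolding w using Q by simp
  have pow: "(1 - \<rho>) ^ (k + n) = exp (real (k + n) * ln (1 - \<rho>))"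
    using rho by (subst exp_of_nat_mult) simp
  have "exp ((D + \<eta>) * real (L * n)) * (\<alpha> / ((1 - \<rho>) ^ (k + n) * \<rho>))
      = exp ((D + \<eta>) * real (L * n) + ln \<alpha> - real (k + n) * ln (1 - \<rho>) - ln \<rho>)"
    unfolding pow using a rho by (simp add: exp_diff exp_add)
  also have "(D + \<eta>) * real (L * n) + ln \<alpha> - real (k + n) * ln (1 - \<rho>) - ln \<rho>
      = real n * w - A - 2 * ln \<rho> + real k * cr"
    by (simp add: lna lncr w_def algebra_simps)
  also have "real n * w \<le> ((1 - \<epsilon>) * (A / Q) + 1) * w"
    using n w0 unfolding A_def by (rule mult_right_mono)
  also have "((1 - \<epsilon>) * (A / Q) + 1) * w = (1 - \<epsilon>) * A + (1 - \<epsilon>) * A * \<epsilon> / 2 + w"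
    unfolding w using Q eta by (simp add: field_simps)
  also have "(1 - \<epsilon>) * A * \<epsilon> / 2 \<le> A * \<epsilon> / 2"
  proof -
    have "0 \<le> A * \<epsilon> * \<epsilon>" using A eps unfolding A_def by simp
    then show ?thesis by (simp add: algebra_simps)
  qed
  finally have "exp ((D + \<eta>) * real (L * n)) * (\<alpha> / ((1 - \<rho>) ^ (k + n) * \<rho>))
      \<le> exp (- \<epsilon> * A / 2 + (D + \<eta>) * real L + real (Suc k) * cr - 2 * ln \<rho>)"
    by (simp add: w_def algebra_simps)
  then show ?thesis unfolding A_def cr_def .
qed

lemma ln_inverse_gt:
  fixes \<rho> \<alpha> a :: real
  assumes rho: "0 < \<rho>" and a: "0 < \<alpha>" and small: "\<alpha> < exp (- a) / \<rho>"
  shows "a < ln (1 / (\<rho> * \<alpha>))"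
proof -
  have "\<rho> * \<alpha> < exp (- a)" using small rho by (simp add: field_simps)
  then have "ln (\<rho> * \<alpha>) < ln (exp (- a))" using a rho by (subst ln_less_cancel_iff) auto
  then show ?thesis using a rho by (simp add: ln_div)
qed

lemma horizon_bounds:
  fixes A Q \<epsilon> M0 :: real and L :: nat
  assumes Q: "0 < Q" and eps: "0 < \<epsilon>" "\<epsilon> < 1" and A: "0 < A" and L: "1 \<le> L"
    and A_large: "M0 * Q / (1 - \<epsilon>) < A"
  shows "(1 - \<epsilon>) * (A / Q) \<le> real (nat \<lceil>(1 - \<epsilon>) * (A / Q)\<rceil>)"
    and "real (nat \<lceil>(1 - \<epsilon>) * (A / Q)\<rceil>) \<le> (1 - \<epsilon>) * (A / Q) + 1"
    and "0 < nat \<lceil>(1 - \<epsilon>) * (A / Q)\<rceil>"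
    and "M0 \<le> real (L * nat \<lceil>(1 - \<epsilon>) * (A / Q)\<rceil>)"
proof -
  have pos: "0 < (1 - \<epsilon>) * (A / Q)" using A eps Q by simp
  show ge: "(1 - \<epsilon>) * (A / Q) \<le> real (nat \<lceil>(1 - \<epsilon>) * (A / Q)\<rceil>)"
    by (rule real_nat_ceiling_ge)
  show "real (nat \<lceil>(1 - \<epsilon>) * (A / Q)\<rceil>) \<le> (1 - \<epsilon>) * (A / Q) + 1"
    using pos of_int_ceiling_le_add_one by simp
  show "0 < nat \<lceil>(1 - \<epsilon>) * (A / Q)\<rceil>" using pos ge by linarith
  have "M0 * Q < A * (1 - \<epsilon>)" using A_large eps by (simp add: field_simps)
  then have "M0 \<le> (1 - \<epsilon>) * (A / Q)" using Q by (simp add: field_simps)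
  also note ge
  also have "real (nat \<lceil>(1 - \<epsilon>) * (A / Q)\<rceil>) \<le> real (L * nat \<lceil>(1 - \<epsilon>) * (A / Q)\<rceil>)"
    using L mult_right_mono[of 1 "real L" "real (nat \<lceil>(1 - \<epsilon>) * (A / Q)\<rceil>)"] by simp
  finally show "M0 \<le> real (L * nat \<lceil>(1 - \<epsilon>) * (A / Q)\<rceil>)" .
qed

context setting begin

text \<open>The truncation level c and the slack eta are fixed first;
  then all three terms of early_stop_bound are below e/3 once log(1/(rho alpha)) is large.\<close>

lemma early_detection_small:
  fixes \<rho> \<epsilon> e :: real and k :: nat and r :: "nat \<Rightarrow> real"
  assumes rho: "0 < \<rho>" "\<rho> < 1" and eps: "0 < \<epsilon>" "\<epsilon> < 1"
    and Dp: "0 < KL_div \<mu> f1 f0" and e: "0 < e"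
  shows "\<exists>\<alpha>0>0. \<forall>\<alpha> \<tau>. 0 < \<alpha> \<longrightarrow> \<alpha> < \<alpha>0 \<longrightarrow> \<tau> \<in> Delta \<mu> f0 f1 L \<rho> r \<alpha> \<longrightarrow>
     measure (model \<mu> f0 f1 L (return_pmf k) r)
       {p \<in> space (model \<mu> f0 f1 L (return_pmf k) r).
          enat k \<le> \<tau> (snd p) \<and>
          (\<exists>n. \<tau> (snd p) = enat n \<and>
               real n < real k + (1 - \<epsilon>) *
                 (ln (1 / (\<rho> * \<alpha>)) / (real L * KL_div \<mu> f1 f0 + \<bar>ln (1 - \<rho>)\<bar>)))} \<le> e"
proof -
  define D where "D = KL_div \<mu> f1 f0"
  define Q where "Q = real L * D + \<bar>ln (1 - \<rho>)\<bar>"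
  have Q: "0 < Q" unfolding Q_def D_def using Dp L by (simp add: add_pos_nonneg)
  define \<eta> where "\<eta> = \<epsilon> * Q / (2 * real L)"
  have eta: "0 < \<eta>" unfolding \<eta>_def using eps Q L by simp
  have etaL: "\<eta> * real L = \<epsilon> * Q / 2" unfolding \<eta>_def using L by (simp add: field_simps)
  obtain c where c: "0 < c" and overshoot: "(\<integral>x. max 0 (\<bar>ln (lr x)\<bar> - c) \<partial>\<nu>1) \<le> min (\<eta> / 4) (e * \<eta> / 6)"
    using overshoot_small[OF llr_integrable, of "min (\<eta> / 4) (e * \<eta> / 6)"] eta e by auto
  define M0 where "M0 = 192 * c\<^sup>2 / (\<eta>\<^sup>2 * e)"
  define K0 where "K0 = (D + \<eta>) * real L + real (Suc k) * \<bar>ln (1 - \<rho>)\<bar> - 2 * ln \<rho>"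
  define As where "As = max 1 (max (2 * (K0 - ln (e / 3)) / \<epsilon>) (M0 * Q / (1 - \<epsilon>)))"
  show ?thesis
  proof (intro exI[of _ "exp (- As) / \<rho>"] conjI allI impI)
    show "0 < exp (- As) / \<rho>" using rho by simp
    fix \<alpha> \<tau> assume a: "0 < \<alpha>" "\<alpha> < exp (- As) / \<rho>" and tD: "\<tau> \<in> Delta \<mu> f0 f1 L \<rho> r \<alpha>"
    define A where "A = ln (1 / (\<rho> * \<alpha>))"
    have "As < A" unfolding A_def by (rule ln_inverse_gt[OF rho(1) a])
    then have A1: "1 < A" and A2: "2 * (K0 - ln (e / 3)) / \<epsilon> < A" and A3: "M0 * Q / (1 - \<epsilon>) < A"
      unfolding As_def by auto
    define n0 where "n0 = nat \<lceil>(1 - \<epsilon>) * (A / Q)\<rceil>"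
    have n0_ge: "(1 - \<epsilon>) * (A / Q) \<le> real n0" and n0_le: "real n0 \<le> (1 - \<epsilon>) * (A / Q) + 1"
      and n0_pos: "0 < n0" and M0_le: "M0 \<le> real (L * n0)"
      using horizon_bounds[OF Q eps _ L A3] A1 unfolding n0_def by auto
    from tD have st: "stopping_time (obs_filtration \<mu> L) \<tau>"
      and false_alarm: "measure (model \<mu> f0 f1 L (geometric_pmf \<rho>) r)
       {p \<in> space (model \<mu> f0 f1 L (geometric_pmf \<rho>) r). \<tau> (snd p) < enat (hd (fst p))} \<le> \<alpha>"
      by (auto simp: Delta_def)
    have exp_term: "exp ((D + \<eta>) * real (L * n0)) * (\<alpha> / ((1 - \<rho>) ^ (k + n0) * \<rho>)) \<le> e / 3"
    proof -
      have "exp ((D + \<eta>) * real (L * n0)) * (\<alpha> / ((1 - \<rho>) ^ (k + n0) * \<rho>))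
          \<le> exp (- \<epsilon> * A / 2 + (D + \<eta>) * real L + real (Suc k) * \<bar>ln (1 - \<rho>)\<bar> - 2 * ln \<rho>)"
        unfolding A_def
        by (rule false_alarm_exponent[OF rho a(1) eps])
          (use Dp Q etaL A1 n0_le in \<open>simp_all add: A_def D_def Q_def\<close>)
      also have "\<dots> = exp (- \<epsilon> * A / 2 + K0)" by (simp add: K0_def)
      also have "\<dots> \<le> exp (ln (e / 3))" using A2 eps by (simp add: field_simps)
      finally show ?thesis using e by simp
    qed
    have lln_term: "64 * c\<^sup>2 / (\<eta>\<^sup>2 * real (L * n0)) \<le> e / 3"
    proof -
      have "64 * c\<^sup>2 / (\<eta>\<^sup>2 * real (L * n0)) \<le> 64 * c\<^sup>2 / (\<eta>\<^sup>2 * M0)"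
      proof (rule divide_left_mono)
        have M0_pos: "0 < M0" unfolding M0_def using c eta e by simp
        then have "0 < real (L * n0)" using M0_le by linarith
        then show "0 < \<eta>\<^sup>2 * real (L * n0) * (\<eta>\<^sup>2 * M0)" using M0_pos eta by simp
        show "\<eta>\<^sup>2 * M0 \<le> \<eta>\<^sup>2 * real (L * n0)" using M0_le by (simp add: mult_left_mono)
      qed simp
      also have "\<dots> = e / 3" unfolding M0_def using eta c e by (simp add: field_simps)
      finally show ?thesis .
    qed
    have overshoot_term: "2 * (\<integral>x. max 0 (\<bar>ln (lr x)\<bar> - c) \<partial>\<nu>1) / \<eta> \<le> e / 3"
      using overshoot eta by (simp add: field_simps)
    have "measure (model \<mu> f0 f1 L (return_pmf k) r)
       {p \<in> space (model \<mu> f0 f1 L (return_pmf k) r).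
          enat k \<le> \<tau> (snd p) \<and> (\<exists>n. \<tau> (snd p) = enat n \<and> real n < real k + (1 - \<epsilon>) * (A / Q))}
      \<le> measure (model \<mu> f0 f1 L (return_pmf k) r) {p \<in> space PS. \<tau> (snd p) < enat (k + n0)}"
    proof (rule stop_before_measure_mono[OF st])
      fix n assume "real n < real k + (1 - \<epsilon>) * (A / Q)"
      then have "real n < real (k + n0)" using n0_ge by simp
      then show "n < k + n0" by (simp only: of_nat_less_iff)
    qed
    also have "\<dots> \<le> exp ((D + \<eta>) * real (L * n0)) * (\<alpha> / ((1 - \<rho>) ^ (k + n0) * \<rho>)) +
        (64 * c\<^sup>2 / (\<eta>\<^sup>2 * real (L * n0)) + 2 * (\<integral>x. max 0 (\<bar>ln (lr x)\<bar> - c) \<partial>\<nu>1) / \<eta>)"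
      using early_stop_bound[OF st _ rho false_alarm c eta, where k=k and N="k + n0"] n0_pos Dp overshoot
      by (simp add: D_def)
    also have "\<dots> \<le> e" using exp_term lln_term overshoot_term by linarith
    finally show "measure (model \<mu> f0 f1 L (return_pmf k) r)
       {p \<in> space (model \<mu> f0 f1 L (return_pmf k) r).
          enat k \<le> \<tau> (snd p) \<and>
          (\<exists>n. \<tau> (snd p) = enat n \<and>
               real n < real k + (1 - \<epsilon>) *
                 (ln (1 / (\<rho> * \<alpha>)) / (real L * KL_div \<mu> f1 f0 + \<bar>ln (1 - \<rho>)\<bar>)))} \<le> e"
      by (simp add: A_def Q_def D_def)
  qed
qed

end

lemma SUP_tendsto_zero_at_right:
  fixes F :: "real \<Rightarrow> 'a \<Rightarrow> real"
  assumes ne: "\<And>\<alpha>. 0 < \<alpha> \<Longrightarrow> \<Delta> \<alpha> \<noteq> {}" and nonneg: "\<And>\<alpha> \<tau>. 0 \<le> F \<alpha> \<tau>"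
    and small: "\<And>e. 0 < e \<Longrightarrow> \<exists>\<alpha>0>0. \<forall>\<alpha> \<tau>. 0 < \<alpha> \<longrightarrow> \<alpha> < \<alpha>0 \<longrightarrow> \<tau> \<in> \<Delta> \<alpha> \<longrightarrow> F \<alpha> \<tau> \<le> e"
  shows "((\<lambda>\<alpha>. SUP \<tau>\<in>\<Delta> \<alpha>. F \<alpha> \<tau>) \<longlongrightarrow> 0) (at_right 0)"
proof (rule tendstoI)
  fix e :: real assume e: "0 < e"
  obtain \<alpha>0 where a0: "0 < \<alpha>0" and bnd: "\<And>\<alpha> \<tau>. 0 < \<alpha> \<Longrightarrow> \<alpha> < \<alpha>0 \<Longrightarrow> \<tau> \<in> \<Delta> \<alpha> \<Longrightarrow> F \<alpha> \<tau> \<le> e / 2"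
    using small[of "e / 2"] e by auto
  show "eventually (\<lambda>\<alpha>. dist (SUP \<tau>\<in>\<Delta> \<alpha>. F \<alpha> \<tau>) 0 < e) (at_right 0)"
    unfolding eventually_at_right_field
  proof (intro exI[of _ \<alpha>0] conjI allI impI a0)
    fix \<alpha> :: real assume a: "0 < \<alpha>" "\<alpha> < \<alpha>0"
    obtain \<tau>0 where \<tau>0: "\<tau>0 \<in> \<Delta> \<alpha>" using ne[OF a(1)] by blast
    have le: "(SUP \<tau>\<in>\<Delta> \<alpha>. F \<alpha> \<tau>) \<le> e / 2"
      using ne bnd a by (intro cSUP_least) auto
    have "0 \<le> F \<alpha> \<tau>0" by (rule nonneg)
    also have "\<dots> \<le> (SUP \<tau>\<in>\<Delta> \<alpha>. F \<alpha> \<tau>)"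
      using bnd a by (intro cSUP_upper[OF \<tau>0] bdd_aboveI[of _ "e / 2"]) auto
    finally show "dist (SUP \<tau>\<in>\<Delta> \<alpha>. F \<alpha> \<tau>) 0 < e"
      using le e by (simp add: dist_real_def)
  qed
qed

text \<open>The stopping time that never stops has no false alarms, so every Delta_alpha is nonempty.\<close>

theorem mainTheorem7:
  fixes \<mu> :: "'b measure" and f0 f1 :: "'b \<Rightarrow> real" and L :: nat and \<rho> :: real
    and r :: "nat \<Rightarrow> real" and \<epsilon> :: real and k :: nat
  assumes L: "L \<ge> 1"
    and rho: "0 < \<rho>" "\<rho> < 1"
    and r: "\<And>l. 2 \<le> l \<Longrightarrow> l \<le> L \<Longrightarrow> 0 < r l \<and> r l \<le> 1"
    and f0: "f0 \<in> borel_measurable \<mu>" "\<And>x. x \<in> space \<mu> \<Longrightarrow> 0 \<le> f0 x"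
            "(\<integral>\<^sup>+ x. ennreal (f0 x) \<partial>\<mu>) = 1"
    and f1: "f1 \<in> borel_measurable \<mu>" "\<And>x. x \<in> space \<mu> \<Longrightarrow> 0 \<le> f1 x"
            "(\<integral>\<^sup>+ x. ennreal (f1 x) \<partial>\<mu>) = 1"
    and mac: "AE x in \<mu>. (f0 x = 0 \<longleftrightarrow> f1 x = 0)"
    and KL_fin: "integrable \<mu> (\<lambda>x. f1 x * ln (f1 x / f0 x))"
    and KL_pos: "0 < KL_div \<mu> f1 f0"
    and eps: "0 < \<epsilon>" "\<epsilon> < 1"
    and k: "k \<ge> 1"
  shows "((\<lambda>\<alpha>. SUP \<tau>\<in>Delta \<mu> f0 f1 L \<rho> r \<alpha>.
            measure (model \<mu> f0 f1 L (return_pmf k) r)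
              {p \<in> space (model \<mu> f0 f1 L (return_pmf k) r).
                 enat k \<le> \<tau> (snd p) \<and>
                 (\<exists>n. \<tau> (snd p) = enat n \<and>
                      real n < real k + (1 - \<epsilon>) *
                        (ln (1 / (\<rho> * \<alpha>)) / (real L * KL_div \<mu> f1 f0 + \<bar>ln (1 - \<rho>)\<bar>)))})
         \<longlongrightarrow> 0) (at_right 0)"
proof -
  interpret setting \<mu> f0 f1 L
    by unfold_locales (use L f0 f1 mac KL_fin in auto)
  have never_stop: "(\<lambda>_. \<infinity>) \<in> Delta \<mu> f0 f1 L \<rho> r \<alpha>" if "0 < \<alpha>" for \<alpha>
    using that by (simp add: Delta_def stopping_time_const)
  show ?thesis
  proof (rule SUP_tendsto_zero_at_right)
    show "Delta \<mu> f0 f1 L \<rho> r \<alpha> \<noteq> {}" if "0 < \<alpha>" for \<alpha> using never_stop[OF that] by blast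
  qed (simp, rule early_detection_small[OF rho eps KL_pos], assumption)
qed

end
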